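(* For all positive integers $t,s$, the complete bipartite graph $K_{4t,4s}$ has an almost 2-perfect 8-cycle decomposition.
   Context: An 8-cycle decomposition of a graph $G$ is a collection of pairwise edge-disjoint 8-cycles in $G$ whose edge sets partition $E(G)$. For an 8-cycle $C$, an inside 8-cycle of $C$ is an 8-cycle on the same vertex set as $C$ sharing no edge with $C$. An 8-cycle decomposition $\mathcal{C}$ of $G$ is almost 2-perfect (A2P) if one can choose, for each $C\in\mathcal{C}$, an inside 8-cycle $C'$ of $C$ with all edges in $G$, such that the chosen cycles $\{C'\}$ again form an 8-cycle decomposition of $G$. *)

theory Defs
  imports Main
begin

text \<open>A (simple) graph is given by its edge set: a set of 2-element vertex sets.\<close>

definition cycle_edges :: "'a list \<Rightarrow> 'a set set" where
  "cycle_edges vs = {{vs ! i, vs ! ((i + 1) mod length vs)} | i. i < length vs}"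

definition is_8cycle :: "'a set set \<Rightarrow> bool" where
  "is_8cycle C \<longleftrightarrow> (\<exists>vs. length vs = 8 \<and> distinct vs \<and> C = cycle_edges vs)"

definition cycle_vertices :: "'a set set \<Rightarrow> 'a set" where
  "cycle_vertices C = \<Union>C"

definition inside_8cycle :: "'a set set \<Rightarrow> 'a set set \<Rightarrow> bool" where
  "inside_8cycle C C' \<longleftrightarrow> is_8cycle C' \<and> cycle_vertices C' = cycle_vertices C \<and> C' \<inter> C = {}"

definition eight_cycle_decomposition :: "'a set set \<Rightarrow> 'a set set set \<Rightarrow> bool" where
  "eight_cycle_decomposition E \<C> \<longleftrightarrow>
     (\<forall>C\<in>\<C>. is_8cycle C) \<and>
     (\<forall>C\<in>\<C>. \<forall>D\<in>\<C>. C \<noteq> D \<longrightarrow> C \<inter> D = {}) \<and>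
     \<Union>\<C> = E"

definition almost_2_perfect :: "'a set set \<Rightarrow> 'a set set set \<Rightarrow> bool" where
  "almost_2_perfect E \<C> \<longleftrightarrow> eight_cycle_decomposition E \<C> \<and>
     (\<exists>f. (\<forall>C\<in>\<C>. inside_8cycle C (f C) \<and> f C \<subseteq> E) \<and>
          (\<forall>C\<in>\<C>. \<forall>D\<in>\<C>. C \<noteq> D \<longrightarrow> f C \<inter> f D = {}) \<and>
          eight_cycle_decomposition E (f ` \<C>))"

definition K_bip :: "nat \<Rightarrow> nat \<Rightarrow> (nat + nat) set set" where
  "K_bip m n = {{Inl i, Inr j} | i j. i < m \<and> j < n}"

end

theory Submission
  imports Defs
begin

text \<open>Split the two sides of \<open>K\<^sub>4\<^sub>t\<^sub>,\<^sub>4\<^sub>s\<close> into consecutive quadruples. The resulting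
  \<open>t \<cdot> s\<close> edge-disjoint copies of \<open>K\<^sub>4\<^sub>,\<^sub>4\<close> each split into two 8-cycles with the same vertex
  set, each an inside 8-cycle of the other. Taking all these cycles as the decomposition and
  swapping the two cycles of every block gives the required family of inside cycles.\<close>

lemma Union_cycle_edges:
  assumes "length vs \<ge> 2"
  shows "\<Union>(cycle_edges vs) = set vs"
proof
  show "\<Union>(cycle_edges vs) \<subseteq> set vs"
    unfolding cycle_edges_def using assms by (auto intro!: nth_mem mod_less_divisor)
  show "set vs \<subseteq> \<Union>(cycle_edges vs)"
  proof
    fix x assume "x \<in> set vs"
    then obtain i where "i < length vs" "x = vs ! i" by (auto simp: in_set_conv_nth)
    then show "x \<in> \<Union>(cycle_edges vs)" unfolding cycle_edges_def by blast
  qed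
qed

lemma cycle_edges_8:
  "cycle_edges [x0, x1, x2, x3, x4, x5, x6, x7] =
    {{x0, x1}, {x1, x2}, {x2, x3}, {x3, x4}, {x4, x5}, {x5, x6}, {x6, x7}, {x7, x0}}"
proof -
  have "{..<8::nat} = {0, 1, 2, 3, 4, 5, 6, 7}" by auto
  moreover have "cycle_edges vs = (\<lambda>i. {vs ! i, vs ! ((i + 1) mod 8)}) ` {..<8}"
    if "length vs = 8" for vs :: "'a list"
    unfolding cycle_edges_def that by auto
  ultimately show ?thesis by simp
qed

lemma is_8cycle_cycle_edges: "length vs = 8 \<Longrightarrow> distinct vs \<Longrightarrow> is_8cycle (cycle_edges vs)"
  unfolding is_8cycle_def by blast

lemma is_8cycle_nonempty: "is_8cycle C \<Longrightarrow> C \<noteq> {}"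
  unfolding is_8cycle_def cycle_edges_def by fastforce

lemma almost_2_perfect_pair:
  assumes "is_8cycle C" "is_8cycle D" "C \<inter> D = {}"
    and "cycle_vertices C = cycle_vertices D"
  shows "almost_2_perfect (C \<union> D) {C, D}"
proof -
  have "C \<noteq> D" using assms(1,3) is_8cycle_nonempty by blast
  define swap where "swap X = (if X = C then D else C)" for X
  have "swap ` {C, D} = {C, D}" using \<open>C \<noteq> D\<close> by (auto simp: swap_def)
  moreover have "eight_cycle_decomposition (C \<union> D) {C, D}"
    using assms unfolding eight_cycle_decomposition_def by blast
  ultimately show ?thesis
    using assms \<open>C \<noteq> D\<close> unfolding almost_2_perfect_def inside_8cycle_def
    by (intro conjI exI[of _ swap]) (auto simp: swap_def)
qed

lemma eight_cycle_decomposition_UN: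
  assumes dec: "\<And>i. i \<in> I \<Longrightarrow> eight_cycle_decomposition (G i) (\<C> i)"
    and disj: "\<And>i j. i \<in> I \<Longrightarrow> j \<in> I \<Longrightarrow> i \<noteq> j \<Longrightarrow> G i \<inter> G j = {}"
  shows "eight_cycle_decomposition (\<Union>i\<in>I. G i) (\<Union>i\<in>I. \<C> i)"
  unfolding eight_cycle_decomposition_def
proof (intro conjI ballI impI)
  fix C assume "C \<in> (\<Union>i\<in>I. \<C> i)"
  then show "is_8cycle C" using dec unfolding eight_cycle_decomposition_def by blast
next
  fix C D assume "C \<in> (\<Union>i\<in>I. \<C> i)" "D \<in> (\<Union>i\<in>I. \<C> i)" "C \<noteq> D"
  then obtain i j where ij: "i \<in> I" "j \<in> I" "C \<in> \<C> i" "D \<in> \<C> j" by blast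
  show "C \<inter> D = {}"
  proof (cases "i = j")
    case True
    with ij \<open>C \<noteq> D\<close> dec[OF \<open>i \<in> I\<close>] show ?thesis
      unfolding eight_cycle_decomposition_def by blast
  next
    case False
    have "C \<subseteq> G i" "D \<subseteq> G j"
      using ij dec unfolding eight_cycle_decomposition_def by blast+
    with disj[OF \<open>i \<in> I\<close> \<open>j \<in> I\<close> False] show ?thesis by blast
  qed
next
  have "\<Union>(\<C> i) = G i" if "i \<in> I" for i
    using dec[OF that] unfolding eight_cycle_decomposition_def by blast
  then show "\<Union>(\<Union>i\<in>I. \<C> i) = (\<Union>i\<in>I. G i)" by blast
qed

lemma eight_cycle_decomposition_UN_index_unique:
  assumes dec: "\<And>i. i \<in> I \<Longrightarrow> eight_cycle_decomposition (G i) (\<C> i)"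
    and disj: "\<And>i j. i \<in> I \<Longrightarrow> j \<in> I \<Longrightarrow> i \<noteq> j \<Longrightarrow> G i \<inter> G j = {}"
    and "i \<in> I" "j \<in> I" "C \<in> \<C> i" "C \<in> \<C> j"
  shows "i = j"
proof -
  have "C \<subseteq> G i" "C \<subseteq> G j" "is_8cycle C"
    using assms(3-6) dec unfolding eight_cycle_decomposition_def by blast+
  then show ?thesis using disj assms(3,4) is_8cycle_nonempty by blast
qed

definition inside_8cycle_family ::
    "'a set set \<Rightarrow> 'a set set set \<Rightarrow> ('a set set \<Rightarrow> 'a set set) \<Rightarrow> bool" where
  "inside_8cycle_family E \<C> f \<longleftrightarrow>
     (\<forall>C\<in>\<C>. inside_8cycle C (f C) \<and> f C \<subseteq> E) \<and>
     (\<forall>C\<in>\<C>. \<forall>D\<in>\<C>. C \<noteq> D \<longrightarrow> f C \<inter> f D = {}) \<and>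
     eight_cycle_decomposition E (f ` \<C>)"

lemma almost_2_perfect_iff:
  "almost_2_perfect E \<C> \<longleftrightarrow>
     eight_cycle_decomposition E \<C> \<and> (\<exists>f. inside_8cycle_family E \<C> f)"
  unfolding almost_2_perfect_def inside_8cycle_family_def ..

lemma inside_8cycle_family_UN:
  assumes fam: "\<And>i. i \<in> I \<Longrightarrow> inside_8cycle_family (G i) (\<C> i) (f i)"
    and disj: "\<And>i j. i \<in> I \<Longrightarrow> j \<in> I \<Longrightarrow> i \<noteq> j \<Longrightarrow> G i \<inter> G j = {}"
    and F: "\<And>i C. i \<in> I \<Longrightarrow> C \<in> \<C> i \<Longrightarrow> F C = f i C"
  shows "inside_8cycle_family (\<Union>i\<in>I. G i) (\<Union>i\<in>I. \<C> i) F"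
proof -
  have f_inside: "inside_8cycle C (f i C)"
    and f_sub: "f i C \<subseteq> G i"
    and f_disj: "D \<in> \<C> i \<Longrightarrow> C \<noteq> D \<Longrightarrow> f i C \<inter> f i D = {}"
    if "i \<in> I" "C \<in> \<C> i" for i C D
    using fam[OF that(1)] that(2) unfolding inside_8cycle_family_def by blast+
  have f_dec: "eight_cycle_decomposition (G i) (f i ` \<C> i)" if "i \<in> I" for i
    using fam[OF that] unfolding inside_8cycle_family_def by blast
  have "F ` (\<Union>i\<in>I. \<C> i) = (\<Union>i\<in>I. f i ` \<C> i)"
    unfolding image_UN using F by (intro SUP_cong image_cong) simp_all
  then have F_dec: "eight_cycle_decomposition (\<Union>i\<in>I. G i) (F ` (\<Union>i\<in>I. \<C> i))"
    using eight_cycle_decomposition_UN[of I G "\<lambda>i. f i ` \<C> i", OF f_dec disj] by simp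
  have F_disj: "F C \<inter> F D = {}"
    if "i \<in> I" "j \<in> I" "C \<in> \<C> i" "D \<in> \<C> j" "C \<noteq> D" for i j C D
  proof (cases "i = j")
    case True
    then show ?thesis using that f_disj unfolding F[OF that(1,3)] F[OF that(2,4)] by simp
  next
    case False
    have "F C \<subseteq> G i" "F D \<subseteq> G j"
      using that f_sub unfolding F[OF that(1,3)] F[OF that(2,4)] by simp_all
    with disj[OF that(1,2) False] show ?thesis by blast
  qed
  show ?thesis
    unfolding inside_8cycle_family_def
  proof (intro conjI ballI impI)
    fix C assume "C \<in> (\<Union>i\<in>I. \<C> i)"
    then obtain i where i: "i \<in> I" "C \<in> \<C> i" by blast
    show "inside_8cycle C (F C)" "F C \<subseteq> (\<Union>i\<in>I. G i)"
      unfolding F[OF i] using f_inside[OF i] f_sub[OF i] i(1) by auto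
    fix D assume "D \<in> (\<Union>i\<in>I. \<C> i)" "C \<noteq> D"
    then show "F C \<inter> F D = {}" using F_disj i by blast
  qed (rule F_dec)
qed

lemma almost_2_perfect_UN:
  assumes a2p: "\<And>i. i \<in> I \<Longrightarrow> almost_2_perfect (G i) (\<C> i)"
    and disj: "\<And>i j. i \<in> I \<Longrightarrow> j \<in> I \<Longrightarrow> i \<noteq> j \<Longrightarrow> G i \<inter> G j = {}"
  shows "almost_2_perfect (\<Union>i\<in>I. G i) (\<Union>i\<in>I. \<C> i)"
proof -
  have dec: "eight_cycle_decomposition (G i) (\<C> i)" if "i \<in> I" for i
    using a2p[OF that] unfolding almost_2_perfect_iff by blast
  have "\<forall>i\<in>I. \<exists>g. inside_8cycle_family (G i) (\<C> i) g"
    using a2p unfolding almost_2_perfect_iff by blast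
  then obtain f where "\<forall>i\<in>I. inside_8cycle_family (G i) (\<C> i) (f i)"
    by (rule bchoice[elim_format]) blast
  then have f: "\<And>i. i \<in> I \<Longrightarrow> inside_8cycle_family (G i) (\<C> i) (f i)" by blast
  define F where "F C = f (THE i. i \<in> I \<and> C \<in> \<C> i) C" for C
  have F_eq: "F C = f i C" if "i \<in> I" "C \<in> \<C> i" for i C
  proof -
    have "(THE i. i \<in> I \<and> C \<in> \<C> i) = i"
    proof (rule the_equality)
      show "i \<in> I \<and> C \<in> \<C> i" using that ..
      fix j assume "j \<in> I \<and> C \<in> \<C> j"
      with that show "j = i"
        by (intro eight_cycle_decomposition_UN_index_unique[OF dec disj]) simp_all
    qed
    then show ?thesis unfolding F_def by simp
  qed
  have "inside_8cycle_family (\<Union>i\<in>I. G i) (\<Union>i\<in>I. \<C> i) F"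
    using inside_8cycle_family_UN[OF f disj F_eq] .
  then show ?thesis
    unfolding almost_2_perfect_iff using eight_cycle_decomposition_UN[OF dec disj]
    by (intro conjI exI[of _ F])
qed

definition block44 :: "nat \<Rightarrow> nat \<Rightarrow> (nat + nat) set set" where
  "block44 p q = {{Inl a, Inr b} | a b. a div 4 = p \<and> b div 4 = q}"

text \<open>With \<open>a\<^sub>r = Inl (4p + r)\<close> and \<open>b\<^sub>u = Inr (4q + u)\<close>, the first cycle uses the edges
  \<open>a\<^sub>r b\<^sub>u\<close> with \<open>u \<equiv> r, r - 1 (mod 4)\<close> and the second those with \<open>u \<equiv> r + 1, r + 2 (mod 4)\<close>.\<close>

definition cycle44_1 :: "nat \<Rightarrow> nat \<Rightarrow> (nat + nat) list" where
  "cycle44_1 p q = [Inl (4*p), Inr (4*q), Inl (4*p+1), Inr (4*q+1),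
                    Inl (4*p+2), Inr (4*q+2), Inl (4*p+3), Inr (4*q+3)]"

definition cycle44_2 :: "nat \<Rightarrow> nat \<Rightarrow> (nat + nat) list" where
  "cycle44_2 p q = [Inl (4*p), Inr (4*q+1), Inl (4*p+3), Inr (4*q),
                    Inl (4*p+2), Inr (4*q+3), Inl (4*p+1), Inr (4*q+2)]"

lemma block44_eq_offsets:
  "block44 p q = {{Inl (4*p + r), Inr (4*q + u)} | r u. r < 4 \<and> u < 4}"
  unfolding block44_def
proof (intro set_eqI iffI)
  fix e assume "e \<in> {{Inl a, Inr b} | a b. a div 4 = p \<and> b div 4 = q}"
  then obtain a b where e: "e = {Inl a, Inr b}" "a div 4 = p" "b div 4 = q" by blast
  then have "a = 4*p + a mod 4" "b = 4*q + b mod 4" by auto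
  then show "e \<in> {{Inl (4*p + r), Inr (4*q + u)} | r u. r < 4 \<and> u < 4}"
    using e(1) by (intro CollectI exI[of _ "a mod 4"] exI[of _ "b mod 4"]) simp
next
  fix e assume "e \<in> {{Inl (4*p + r), Inr (4*q + u)} | r u. r < 4 \<and> u < 4}"
  then obtain r u where "e = {Inl (4*p + r), Inr (4*q + u)}" "r < 4" "u < 4" by blast
  then show "e \<in> {{Inl a, Inr b} | a b. a div 4 = p \<and> b div 4 = q}"
    by (intro CollectI exI[of _ "4*p + r"] exI[of _ "4*q + u"]) simp
qed

lemma in_block44I:
  assumes "a div 4 = p" "b div 4 = q"
  shows "{Inl a, Inr b} \<in> block44 p q" "{Inr b, Inl a} \<in> block44 p q"
proof -
  show "{Inl a, Inr b} \<in> block44 p q"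
    unfolding block44_def using assms by blast
  then show "{Inr b, Inl a} \<in> block44 p q" by (simp add: insert_commute)
qed

lemma block44_split: "block44 p q = cycle_edges (cycle44_1 p q) \<union> cycle_edges (cycle44_2 p q)"
proof
  show "block44 p q \<subseteq> cycle_edges (cycle44_1 p q) \<union> cycle_edges (cycle44_2 p q)"
  proof
    fix e assume "e \<in> block44 p q"
    then obtain r u where e: "e = {Inl (4*p + r), Inr (4*q + u)}" "r < 4" "u < 4"
      unfolding block44_eq_offsets by blast
    then have "r \<in> {0, 1, 2, 3}" "u \<in> {0, 1, 2, 3}" by auto
    then show "e \<in> cycle_edges (cycle44_1 p q) \<union> cycle_edges (cycle44_2 p q)"
      unfolding e(1) cycle44_1_def cycle44_2_def cycle_edges_8
      by (elim insertE emptyE; simp add: doubleton_eq_iff)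
  qed
  show "cycle_edges (cycle44_1 p q) \<union> cycle_edges (cycle44_2 p q) \<subseteq> block44 p q"
    unfolding cycle44_1_def cycle44_2_def cycle_edges_8 by (simp add: in_block44I)
qed

lemma block44_cycles:
  shows "is_8cycle (cycle_edges (cycle44_1 p q))" "is_8cycle (cycle_edges (cycle44_2 p q))"
    and "cycle_edges (cycle44_1 p q) \<inter> cycle_edges (cycle44_2 p q) = {}"
    and "cycle_vertices (cycle_edges (cycle44_1 p q)) = cycle_vertices (cycle_edges (cycle44_2 p q))"
proof -
  show "is_8cycle (cycle_edges (cycle44_1 p q))" "is_8cycle (cycle_edges (cycle44_2 p q))"
    by (auto intro!: is_8cycle_cycle_edges simp: cycle44_1_def cycle44_2_def)
  show "cycle_edges (cycle44_1 p q) \<inter> cycle_edges (cycle44_2 p q) = {}"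
    unfolding cycle44_1_def cycle44_2_def cycle_edges_8 by (auto simp: doubleton_eq_iff)
  show "cycle_vertices (cycle_edges (cycle44_1 p q)) = cycle_vertices (cycle_edges (cycle44_2 p q))"
    unfolding cycle_vertices_def by (auto simp: Union_cycle_edges cycle44_1_def cycle44_2_def)
qed

lemma almost_2_perfect_block44:
  "almost_2_perfect (block44 p q) {cycle_edges (cycle44_1 p q), cycle_edges (cycle44_2 p q)}"
  unfolding block44_split using block44_cycles by (rule almost_2_perfect_pair)

lemma block44_disjoint: "(p, q) \<noteq> (p', q') \<Longrightarrow> block44 p q \<inter> block44 p' q' = {}"
  unfolding block44_def by (auto simp: doubleton_eq_iff)

lemma K_bip_4_4_UN_block44:
  "K_bip (4 * t) (4 * s) = (\<Union>(p, q)\<in>{..<t} \<times> {..<s}. block44 p q)"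
  unfolding K_bip_def block44_def by fastforce

theorem lemma2p1:
  fixes t s :: nat
  assumes "t > 0" and "s > 0"
  shows "\<exists>\<C>. almost_2_perfect (K_bip (4 * t) (4 * s)) \<C>"
proof -
  have "almost_2_perfect (\<Union>(p, q)\<in>{..<t} \<times> {..<s}. block44 p q)
      (\<Union>(p, q)\<in>{..<t} \<times> {..<s}. {cycle_edges (cycle44_1 p q), cycle_edges (cycle44_2 p q)})"
    by (rule almost_2_perfect_UN) (auto simp: almost_2_perfect_block44 block44_disjoint split_paired_all)
  then show ?thesis unfolding K_bip_4_4_UN_block44 by blast
qed

end
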